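(* Let $n$ be even, $1\le q_n\le n/2$, $I_n=\{(i_1,\dots,i_{q_n}):1\le i_1<\dots<i_{q_n}\le n\}$, and for $R=(i_1,\dots,i_{q_n})\in I_n$ let $\Psi_R=\psi_{i_1}\cdots\psi_{i_{q_n}}\,i^{\lfloor q_n/2\rfloor}$. Let $\pi\in\mathcal{P}_2(k)$ and set $$S(\pi,n):=\frac{1}{|I_n|^{k/2}}\sum_{\substack{\alpha:[k]\to I_n\\ \ker\alpha\ge\pi}}\operatorname{tr}(\Psi_{\alpha(1)}\cdots\Psi_{\alpha(k)}).$$ Let $V$ be a block of $\pi$ and $R\in I_n$. Then $$\frac{1}{|I_n|^{(k-2)/2}}\sum_{\substack{\alpha:[k]\to I_n\\ \ker\alpha\ge\pi\\ \alpha(V)=R}}\operatorname{tr}(\Psi_{\alpha(1)}\cdots\Psi_{\alpha(k)})=S(\pi,n);$$ in particular this restricted sum does not depend on the choice of the block $V$ nor of the value $R$.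
   Context: $\psi_1,\dots,\psi_n$ are Majorana fermions: $2^{n/2}\times2^{n/2}$ matrices with $\psi_i\psi_j+\psi_j\psi_i=2\delta_{ij}I$, realized as $\psi_j=\sigma_3^{\otimes(j-1)}\otimes\sigma_1\otimes 1^{\otimes(n/2-j)}$, $\psi_{n/2+j}=\sigma_3^{\otimes(j-1)}\otimes\sigma_2\otimes 1^{\otimes(n/2-j)}$ with Pauli matrices. $\operatorname{tr}$ is the normalized trace. $\mathcal{P}_2(k)$ is the set of pair partitions of $[k]=\{1,\dots,k\}$; $\ker\alpha$ is the partition of $[k]$ into the nonempty level sets of $\alpha$; $\pi\le\sigma$ means each block of $\pi$ lies in a block of $\sigma$; for a block $V$ of $\pi\le\ker\alpha$, $\alpha(V)$ is the common value of $\alpha$ on $V$. *)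

theory Defs
  imports Complex_Main "Jordan_Normal_Form.Matrix" "HOL-Library.FuncSet" "HOL-Library.Disjoint_Sets"
begin

definition sigma1 :: "complex mat" where
  "sigma1 = mat_of_rows_list 2 [[0, 1], [1, 0]]"
definition sigma2 :: "complex mat" where
  "sigma2 = mat_of_rows_list 2 [[0, -\<i>], [\<i>, 0]]"
definition sigma3 :: "complex mat" where
  "sigma3 = mat_of_rows_list 2 [[1, 0], [0, -1]]"
definition id2 :: "complex mat" where
  "id2 = 1\<^sub>m 2"

text \<open>Kronecker (tensor) product, standard convention: first factor most significant.\<close>
definition kron :: "complex mat \<Rightarrow> complex mat \<Rightarrow> complex mat" where
  "kron A B = mat (dim_row A * dim_row B) (dim_col A * dim_col B)
     (\<lambda>(i, j). A $$ (i div dim_row B, j div dim_col B) * B $$ (i mod dim_row B, j mod dim_col B))"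

definition kron_list :: "complex mat list \<Rightarrow> complex mat" where
  "kron_list Ms = foldr kron Ms (1\<^sub>m 1)"

text \<open>Majorana fermions \<psi>_1,...,\<psi>_n (1-based index j), n even.\<close>
definition psi :: "nat \<Rightarrow> nat \<Rightarrow> complex mat" where
  "psi n j = (if j \<le> n div 2
     then kron_list (replicate (j - 1) sigma3 @ [sigma1] @ replicate (n div 2 - j) id2)
     else kron_list (replicate (j - n div 2 - 1) sigma3 @ [sigma2] @ replicate (n - j) id2))"

definition ntr :: "complex mat \<Rightarrow> complex" where
  "ntr A = (\<Sum>i<dim_row A. A $$ (i, i)) / of_nat (dim_row A)"

definition mprod :: "nat \<Rightarrow> complex mat list \<Rightarrow> complex mat" where
  "mprod n Ms = foldr (*) Ms (1\<^sub>m (2 ^ (n div 2)))"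

definition Iset :: "nat \<Rightarrow> nat \<Rightarrow> nat list set" where
  "Iset n q = {R. length R = q \<and> sorted_wrt (<) R \<and> set R \<subseteq> {1..n}}"

definition PsiR :: "nat \<Rightarrow> nat list \<Rightarrow> complex mat" where
  "PsiR n R = (\<i> ^ (length R div 2)) \<cdot>\<^sub>m mprod n (map (psi n) R)"

definition pair_partitions :: "nat \<Rightarrow> nat set set set" where
  "pair_partitions k = {P. partition_on {1..k} P \<and> (\<forall>B\<in>P. card B = 2)}"

definition ker_ge :: "(nat \<Rightarrow> 'b) \<Rightarrow> nat set set \<Rightarrow> bool" where
  "ker_ge \<alpha> P \<longleftrightarrow> (\<forall>B\<in>P. \<forall>x\<in>B. \<forall>y\<in>B. \<alpha> x = \<alpha> y)"

definition trword :: "nat \<Rightarrow> nat \<Rightarrow> (nat \<Rightarrow> nat list) \<Rightarrow> complex" where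
  "trword n k \<alpha> = ntr (mprod n (map (\<lambda>m. PsiR n (\<alpha> m)) [1..<k+1]))"

definition S :: "nat \<Rightarrow> nat \<Rightarrow> nat \<Rightarrow> nat set set \<Rightarrow> complex" where
  "S n q k P = (\<Sum>\<alpha> \<in> {\<alpha>. \<alpha> \<in> {1..k} \<rightarrow>\<^sub>E Iset n q \<and> ker_ge \<alpha> P}. trword n k \<alpha>)
      / of_real (real (card (Iset n q)) powr (real k / 2))"

end

theory Submission
  imports Defs "HOL-Combinatorics.Transposition"
begin

text \<open>
  For adjacent indices a, a + 1 put U = \<psi>(a) + \<psi>(a + 1). The Clifford relations give
  U U = 2, U \<psi>(a) = \<psi>(a + 1) U, U \<psi>(a + 1) = \<psi>(a) U and U \<psi>(l) = - \<psi>(l) U for all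
  other l, hence U \<Psi>(R) = \<plusminus>\<Psi>(\<tau> R) U, where \<tau> R is R with a and a + 1 exchanged and
  re-sorted. Writing tr W = tr (U W U) / 2 moves every letter \<Psi>(\<alpha>(m)) of a word to
  \<Psi>(\<tau> (\<alpha>(m))); the signs depend only on \<alpha>(m), so for \<alpha> constant on the blocks of a
  pairing they cancel in pairs. Thus \<alpha> \<mapsto> \<tau> \<circ> \<alpha> is a trace preserving bijection from
  the \<alpha> with \<alpha>(V) = R onto those with \<alpha>(V) = \<tau> R. Adjacent transpositions connect
  every R in I_n to (1, ..., q), so the restricted sum does not depend on R, and summing
  it over all R gives |I_n|^(k/2) S(\<pi>, n).
\<close>

lemma one_smult_mat [simp]: "(1::'a::monoid_mult) \<cdot>\<^sub>m A = A"
  by (rule eq_matI) auto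

lemma smult_smult_mat [simp]: "a \<cdot>\<^sub>m (b \<cdot>\<^sub>m A) = (a * b :: 'a::semigroup_mult) \<cdot>\<^sub>m A"
  by (rule eq_matI) (auto simp: mult.assoc)

lemma sum_lessThan_mult_nat:
  "(\<Sum>l<a * b. f l) = (\<Sum>u<a. \<Sum>v<b. f (u * b + v :: nat))"
proof -
  have "sum f {u * b..<u * b + b} = (\<Sum>v<b. f (u * b + v))" for u
    using sum.shift_bounds_nat_ivl[of f 0 "u * b" b] by (simp add: atLeast0LessThan add.commute)
  then show ?thesis
    by (simp add: sum.nat_group[symmetric])
qed

lemma div_mod_less_of_less_mult: "i < a * b \<Longrightarrow> i div b < a \<and> i mod b < (b::nat)"
  by (cases "b = 0") (auto simp: less_mult_imp_div_less)

section \<open>Kronecker products\<close>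

lemma dim_kron [simp]:
  "dim_row (kron A B) = dim_row A * dim_row B" "dim_col (kron A B) = dim_col A * dim_col B"
  unfolding kron_def by simp_all

lemma index_kron:
  "i < dim_row A * dim_row B \<Longrightarrow> j < dim_col A * dim_col B \<Longrightarrow>
   kron A B $$ (i, j) = A $$ (i div dim_row B, j div dim_col B) * B $$ (i mod dim_row B, j mod dim_col B)"
  unfolding kron_def by simp

lemma kron_mult:
  assumes A: "A \<in> carrier_mat a a'" and C: "C \<in> carrier_mat a' a''"
    and B: "B \<in> carrier_mat b b'" and D: "D \<in> carrier_mat b' b''"
  shows "kron A B * kron C D = kron (A * C) (B * D)"
proof (rule eq_matI)
  fix i j assume "i < dim_row (kron (A * C) (B * D))" "j < dim_col (kron (A * C) (B * D))"
  then have i: "i < a * b" and j: "j < a'' * b''" using A B C D by auto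
  have ij: "i div b < a" "i mod b < b" "j div b'' < a''" "j mod b'' < b''"
    using i j div_mod_less_of_less_mult by blast+
  have uv: "(u * b' + v) div b' = u" "(u * b' + v) mod b' = v" "u * b' + v < a' * b'"
    if "u < a'" "v < b'" for u v
  proof -
    have "u * b' + v < Suc u * b'" using that(2) by simp
    also have "\<dots> \<le> a' * b'" using that(1) by (intro mult_le_mono1) simp
    finally show "u * b' + v < a' * b'" .
  qed (use that in simp_all)
  have "(kron A B * kron C D) $$ (i, j) = (\<Sum>l<a' * b'. kron A B $$ (i, l) * kron C D $$ (l, j))"
    using A B C D i j by (simp add: scalar_prod_def atLeast0LessThan)
  also have "\<dots> = (\<Sum>u<a'. \<Sum>v<b'. (A $$ (i div b, u) * C $$ (u, j div b'')) *
                                      (B $$ (i mod b, v) * D $$ (v, j mod b'')))"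
    using A B C D i j uv by (simp add: sum_lessThan_mult_nat index_kron mult_ac)
  also have "\<dots> = (A * C) $$ (i div b, j div b'') * (B * D) $$ (i mod b, j mod b'')"
    using A B C D ij by (simp add: sum_product scalar_prod_def atLeast0LessThan)
  also have "\<dots> = kron (A * C) (B * D) $$ (i, j)"
    using A B C D i j by (simp add: index_kron)
  finally show "(kron A B * kron C D) $$ (i, j) = kron (A * C) (B * D) $$ (i, j)" .
qed auto

lemma kron_smult: "kron (c \<cdot>\<^sub>m A) (e \<cdot>\<^sub>m B) = (c * e) \<cdot>\<^sub>m kron A B"
  by (rule eq_matI) (simp_all add: index_kron div_mod_less_of_less_mult)

lemma kron_one: "kron (1\<^sub>m a) (1\<^sub>m b) = 1\<^sub>m (a * b)"
proof (rule eq_matI)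
  fix i j assume "i < dim_row (1\<^sub>m (a * b))" "j < dim_col (1\<^sub>m (a * b))"
  then have "i < a * b" "j < a * b" by auto
  moreover have "i = j" if "i div b = j div b" "i mod b = j mod b"
    using that by (metis div_mult_mod_eq)
  ultimately show "kron (1\<^sub>m a) (1\<^sub>m b) $$ (i, j) = 1\<^sub>m (a * b) $$ (i, j)"
    by (auto simp: index_kron div_mod_less_of_less_mult)
qed auto

lemma kron_mult_swap:
  assumes "A \<in> carrier_mat a a" "C \<in> carrier_mat a a" "B \<in> carrier_mat b b" "D \<in> carrier_mat b b"
    and "C * A = s \<cdot>\<^sub>m (A * C)" "D * B = t \<cdot>\<^sub>m (B * D)"
  shows "kron C D * kron A B = (s * t) \<cdot>\<^sub>m (kron A B * kron C D)"
  using assms by (simp add: kron_mult kron_smult)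

lemma kron_list_Cons [simp]: "kron_list (M # Ms) = kron M (kron_list Ms)"
  by (simp add: kron_list_def)

lemma kron_list_carrier_mat:
  "set Ms \<subseteq> carrier_mat 2 2 \<Longrightarrow> kron_list Ms \<in> carrier_mat (2 ^ length Ms) (2 ^ length Ms)"
  by (induction Ms) (auto simp: kron_list_def)

lemma kron_list_replicate_id2: "kron_list (replicate m id2) = 1\<^sub>m (2 ^ m)"
  by (induction m) (simp_all add: kron_list_def id2_def kron_one)

lemma kron_list_square:
  assumes "\<And>M. M \<in> set Ms \<Longrightarrow> M \<in> carrier_mat 2 2 \<and> M * M = 1\<^sub>m 2"
  shows "kron_list Ms * kron_list Ms = 1\<^sub>m (2 ^ length Ms)"
  using assms
proof (induction Ms)
  case (Cons M Ms)
  have M: "M \<in> carrier_mat 2 2" "M * M = 1\<^sub>m 2" using Cons.prems by auto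
  have K: "kron_list Ms \<in> carrier_mat (2 ^ length Ms) (2 ^ length Ms)"
    using Cons.prems by (intro kron_list_carrier_mat) auto
  have "kron_list (M # Ms) * kron_list (M # Ms) = kron (M * M) (kron_list Ms * kron_list Ms)"
    using M K by (simp add: kron_list_def kron_mult)
  then show ?case using Cons by (simp add: M kron_one)
qed (simp add: kron_list_def)

section \<open>Pauli matrices and the Jordan--Wigner generators\<close>

lemma pauli_explicit:
  "sigma1 = mat 2 2 (\<lambda>(i, j). if i = j then 0 else 1)"
  "sigma2 = mat 2 2 (\<lambda>(i, j). if i = j then 0 else if i = 0 then -\<i> else \<i>)"
  "sigma3 = mat 2 2 (\<lambda>(i, j). if i = j then (if i = 0 then 1 else -1) else 0)"
  unfolding sigma1_def sigma2_def sigma3_def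
  by (auto intro!: eq_matI simp: mat_of_rows_list_def less_2_cases_iff)

lemma pauli_carrier_mat [simp]:
  "sigma1 \<in> carrier_mat 2 2" "sigma2 \<in> carrier_mat 2 2" "sigma3 \<in> carrier_mat 2 2"
  "id2 \<in> carrier_mat 2 2"
  by (auto simp: pauli_explicit id2_def)

lemma pauli_square:
  "sigma1 * sigma1 = 1\<^sub>m 2" "sigma2 * sigma2 = 1\<^sub>m 2" "sigma3 * sigma3 = 1\<^sub>m 2"
  by (auto intro!: eq_matI simp: pauli_explicit scalar_prod_def less_2_cases_iff
      numeral_2_eq_2 atLeast0_lessThan_Suc)

lemma pauli_anticommute:
  "sigma2 * sigma1 = (-1) \<cdot>\<^sub>m (sigma1 * sigma2)" "sigma1 * sigma2 = (-1) \<cdot>\<^sub>m (sigma2 * sigma1)"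
  "sigma3 * sigma1 = (-1) \<cdot>\<^sub>m (sigma1 * sigma3)" "sigma1 * sigma3 = (-1) \<cdot>\<^sub>m (sigma3 * sigma1)"
  "sigma3 * sigma2 = (-1) \<cdot>\<^sub>m (sigma2 * sigma3)" "sigma2 * sigma3 = (-1) \<cdot>\<^sub>m (sigma3 * sigma2)"
  by (auto intro!: eq_matI simp: pauli_explicit scalar_prod_def less_2_cases_iff
      numeral_2_eq_2 atLeast0_lessThan_Suc)

definition jw_factors :: "nat \<Rightarrow> nat \<Rightarrow> complex mat list" where
  "jw_factors m j = (if j \<le> m then replicate (j - 1) sigma3 @ [sigma1] @ replicate (m - j) id2
     else replicate (j - m - 1) sigma3 @ [sigma2] @ replicate (2 * m - j) id2)"

definition majorana :: "nat \<Rightarrow> nat \<Rightarrow> complex mat" where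
  "majorana m j = kron_list (jw_factors m j)"

lemma psi_eq_majorana: "even n \<Longrightarrow> psi n j = majorana (n div 2) j"
  unfolding psi_def majorana_def jw_factors_def by (auto elim!: evenE)

lemma jw_factors_length: "j \<in> {1..2 * m} \<Longrightarrow> length (jw_factors m j) = m"
  by (auto simp: jw_factors_def)

lemma jw_factors_subset: "set (jw_factors m j) \<subseteq> {sigma1, sigma2, sigma3, id2}"
  by (auto simp: jw_factors_def)

lemma jw_factors_involutions:
  "M \<in> set (jw_factors m j) \<Longrightarrow> M \<in> carrier_mat 2 2 \<and> M * M = 1\<^sub>m 2"
  using jw_factors_subset[of m j] pauli_square by (auto simp: id2_def)

lemma majorana_carrier_mat: "j \<in> {1..2 * m} \<Longrightarrow> majorana m j \<in> carrier_mat (2 ^ m) (2 ^ m)"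
  using kron_list_carrier_mat[of "jw_factors m j"] jw_factors_involutions
  by (auto simp: majorana_def jw_factors_length)

lemma majorana_square: "j \<in> {1..2 * m} \<Longrightarrow> majorana m j * majorana m j = 1\<^sub>m (2 ^ m)"
  using kron_list_square[of "jw_factors m j"] jw_factors_involutions
  by (auto simp: majorana_def jw_factors_length)

text \<open>
  Splitting off the first qubit: the generators 1 and m + 2 are new, every other one is
  sigma3 tensored with the generator jw_index m j on the remaining m qubits.
\<close>

definition jw_head :: "nat \<Rightarrow> nat \<Rightarrow> complex mat" where
  "jw_head m j = (if j = 1 then sigma1 else if j = m + 2 then sigma2 else sigma3)"

definition jw_index :: "nat \<Rightarrow> nat \<Rightarrow> nat" where
  "jw_index m j = (if j \<le> m + 1 then j - 1 else j - 2)"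

definition jw_tail :: "nat \<Rightarrow> nat \<Rightarrow> complex mat" where
  "jw_tail m j = (if j = 1 \<or> j = m + 2 then 1\<^sub>m (2 ^ m) else majorana m (jw_index m j))"

lemma majorana_Suc:
  assumes "j \<in> {1..2 * Suc m}"
  shows "majorana (Suc m) j = kron (jw_head m j) (jw_tail m j)"
proof -
  consider "j = 1" | "j = m + 2" | "2 \<le> j" "j \<le> m + 1" | "m + 3 \<le> j"
    using assms by fastforce
  then have "jw_factors (Suc m) j = jw_head m j #
      (if j = 1 \<or> j = m + 2 then replicate m id2 else jw_factors m (jw_index m j))"
  proof cases
    case 3
    then show ?thesis
      by (cases "j - 1") (auto simp: jw_factors_def jw_head_def jw_index_def)
  next
    case 4
    then show ?thesis using assms
      by (cases "j - Suc m - 1") (auto simp: jw_factors_def jw_head_def jw_index_def)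
  qed (auto simp: jw_factors_def jw_head_def)
  then show ?thesis
    by (simp add: majorana_def jw_tail_def kron_list_replicate_id2)
qed

lemma jw_tail_carrier_mat: "j \<in> {1..2 * Suc m} \<Longrightarrow> jw_tail m j \<in> carrier_mat (2 ^ m) (2 ^ m)"
  by (auto simp: jw_tail_def jw_index_def intro!: majorana_carrier_mat)

lemma majorana_anticommute:
  "i \<in> {1..2 * m} \<Longrightarrow> j \<in> {1..2 * m} \<Longrightarrow> i \<noteq> j \<Longrightarrow>
   majorana m j * majorana m i = (-1) \<cdot>\<^sub>m (majorana m i * majorana m j)"
proof (induction m arbitrary: i j)
  case (Suc m)
  \<comment> \<open>Exactly one of the two tensor factors anticommutes: the first one if i or j is new,
    the second one (by induction) otherwise.\<close>
  let ?new = "\<lambda>x. x = 1 \<or> x = m + 2"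
  have heads: "jw_head m i \<in> carrier_mat 2 2" "jw_head m j \<in> carrier_mat 2 2"
    by (simp_all add: jw_head_def)
  have tails: "jw_tail m i \<in> carrier_mat (2 ^ m) (2 ^ m)" "jw_tail m j \<in> carrier_mat (2 ^ m) (2 ^ m)"
    using Suc.prems by (simp_all add: jw_tail_carrier_mat)
  obtain s t where st: "s * t = -1"
    "jw_head m j * jw_head m i = s \<cdot>\<^sub>m (jw_head m i * jw_head m j)"
    "jw_tail m j * jw_tail m i = t \<cdot>\<^sub>m (jw_tail m i * jw_tail m j)"
  proof (cases "?new i \<or> ?new j")
    case True
    then have "jw_head m j * jw_head m i = (-1) \<cdot>\<^sub>m (jw_head m i * jw_head m j)"
      using Suc.prems by (auto simp: jw_head_def intro: pauli_anticommute)
    moreover have "jw_tail m j * jw_tail m i = 1 \<cdot>\<^sub>m (jw_tail m i * jw_tail m j)"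
      using True tails by (auto simp: jw_tail_def)
    ultimately show ?thesis using that[of "-1" 1] by simp
  next
    case False
    have old: "jw_index m i \<in> {1..2 * m}" "jw_index m j \<in> {1..2 * m}"
      "jw_index m i \<noteq> jw_index m j"
      using False Suc.prems by (auto simp: jw_index_def)
    have "jw_head m j * jw_head m i = 1 \<cdot>\<^sub>m (jw_head m i * jw_head m j)"
      using False by (simp add: jw_head_def)
    moreover have "jw_tail m j * jw_tail m i = (-1) \<cdot>\<^sub>m (jw_tail m i * jw_tail m j)"
      using False Suc.IH[OF old] by (simp add: jw_tail_def)
    ultimately show ?thesis using that[of 1 "-1"] by simp
  qed
  have "majorana (Suc m) j * majorana (Suc m) i = kron (jw_head m j) (jw_tail m j) * kron (jw_head m i) (jw_tail m i)"
    using Suc.prems by (simp add: majorana_Suc)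
  also have "\<dots> = (s * t) \<cdot>\<^sub>m (kron (jw_head m i) (jw_tail m i) * kron (jw_head m j) (jw_tail m j))"
    by (rule kron_mult_swap[OF heads tails st(2,3)])
  also have "\<dots> = (-1) \<cdot>\<^sub>m (majorana (Suc m) i * majorana (Suc m) j)"
    using Suc.prems st(1) by (simp add: majorana_Suc)
  finally show ?case .
qed simp

lemma psi_carrier_mat: "even n \<Longrightarrow> j \<in> {1..n} \<Longrightarrow> psi n j \<in> carrier_mat (2 ^ (n div 2)) (2 ^ (n div 2))"
  by (auto simp: psi_eq_majorana intro: majorana_carrier_mat)

lemma psi_square: "even n \<Longrightarrow> j \<in> {1..n} \<Longrightarrow> psi n j * psi n j = 1\<^sub>m (2 ^ (n div 2))"
  by (auto simp: psi_eq_majorana intro: majorana_square)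

lemma psi_anticommute:
  "even n \<Longrightarrow> i \<in> {1..n} \<Longrightarrow> j \<in> {1..n} \<Longrightarrow> i \<noteq> j \<Longrightarrow>
   psi n j * psi n i = (-1) \<cdot>\<^sub>m (psi n i * psi n j)"
  by (auto simp: psi_eq_majorana intro: majorana_anticommute)

section \<open>Ordered products and the normalized trace\<close>

lemma mprod_Nil [simp]: "mprod n [] = 1\<^sub>m (2 ^ (n div 2))"
  by (simp add: mprod_def)

lemma mprod_Cons [simp]: "mprod n (M # Ms) = M * mprod n Ms"
  by (simp add: mprod_def)

lemma mprod_carrier_mat:
  "set Ms \<subseteq> carrier_mat (2 ^ (n div 2)) (2 ^ (n div 2)) \<Longrightarrow>
   mprod n Ms \<in> carrier_mat (2 ^ (n div 2)) (2 ^ (n div 2))"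
  by (induction Ms) auto

lemma mprod_append:
  assumes "set xs \<subseteq> carrier_mat (2 ^ (n div 2)) (2 ^ (n div 2))"
    and "set ys \<subseteq> carrier_mat (2 ^ (n div 2)) (2 ^ (n div 2))"
  shows "mprod n (xs @ ys) = mprod n xs * mprod n ys"
  using assms
proof (induction xs)
  case Nil
  then have "mprod n ys \<in> carrier_mat (2 ^ (n div 2)) (2 ^ (n div 2))"
    by (simp add: mprod_carrier_mat)
  then show ?case by simp
next
  case (Cons x xs)
  then have "x \<in> carrier_mat (2 ^ (n div 2)) (2 ^ (n div 2))"
    "mprod n xs \<in> carrier_mat (2 ^ (n div 2)) (2 ^ (n div 2))"
    "mprod n ys \<in> carrier_mat (2 ^ (n div 2)) (2 ^ (n div 2))"
    by (auto intro!: mprod_carrier_mat)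
  with Cons show ?case by simp
qed

lemma mprod_swap_adjacent:
  assumes C: "set xs \<subseteq> carrier_mat (2 ^ (n div 2)) (2 ^ (n div 2))"
    "set ys \<subseteq> carrier_mat (2 ^ (n div 2)) (2 ^ (n div 2))"
    "A \<in> carrier_mat (2 ^ (n div 2)) (2 ^ (n div 2))" "B \<in> carrier_mat (2 ^ (n div 2)) (2 ^ (n div 2))"
    and BA: "B * A = (-1) \<cdot>\<^sub>m (A * B)"
  shows "mprod n (xs @ B # A # ys) = (-1) \<cdot>\<^sub>m mprod n (xs @ A # B # ys)"
proof -
  let ?D = "2 ^ (n div 2)" and ?X = "mprod n xs" and ?Y = "mprod n ys"
  have X: "?X \<in> carrier_mat ?D ?D" and Y: "?Y \<in> carrier_mat ?D ?D"
    using C by (simp_all add: mprod_carrier_mat)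
  have AB: "A * B \<in> carrier_mat ?D ?D" and ABY: "A * B * ?Y \<in> carrier_mat ?D ?D"
    using C Y by auto
  have "mprod n (xs @ B # A # ys) = ?X * ((B * A) * ?Y)"
    using C X Y by (simp add: mprod_append)
  also have "\<dots> = (-1) \<cdot>\<^sub>m (?X * ((A * B) * ?Y))"
    by (simp only: BA mult_smult_assoc_mat[OF AB Y] mult_smult_distrib[OF X ABY])
  also have "\<dots> = (-1) \<cdot>\<^sub>m mprod n (xs @ A # B # ys)"
    using C X Y by (simp add: mprod_append)
  finally show ?thesis .
qed

lemma mprod_intertwine:
  assumes U: "U \<in> carrier_mat (2 ^ (n div 2)) (2 ^ (n div 2))"
    and XY: "\<And>m. m \<in> set ms \<Longrightarrow> X m \<in> carrier_mat (2 ^ (n div 2)) (2 ^ (n div 2)) \<and>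
               Y m \<in> carrier_mat (2 ^ (n div 2)) (2 ^ (n div 2)) \<and> U * X m = c m \<cdot>\<^sub>m (Y m * U)"
  shows "U * mprod n (map X ms) = prod_list (map c ms) \<cdot>\<^sub>m (mprod n (map Y ms) * U)"
  using XY
proof (induction ms)
  case (Cons m ms)
  let ?D = "2 ^ (n div 2)" and ?X = "mprod n (map X ms)" and ?Y = "mprod n (map Y ms)"
    and ?c = "prod_list (map c ms)"
  have m: "X m \<in> carrier_mat ?D ?D" "Y m \<in> carrier_mat ?D ?D" "U * X m = c m \<cdot>\<^sub>m (Y m * U)"
    using Cons.prems by auto
  have XY: "?X \<in> carrier_mat ?D ?D" "?Y \<in> carrier_mat ?D ?D"
    using Cons.prems by (auto intro!: mprod_carrier_mat)
  have IH: "U * ?X = ?c \<cdot>\<^sub>m (?Y * U)"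
    using Cons by simp
  have "U * mprod n (map X (m # ms)) = (U * X m) * ?X"
    using U m(1) XY by simp
  also have "\<dots> = c m \<cdot>\<^sub>m (Y m * (U * ?X))"
    using U m XY by (simp add: mult_smult_assoc_mat[of _ ?D ?D])
  also have "\<dots> = c m \<cdot>\<^sub>m (?c \<cdot>\<^sub>m (Y m * (?Y * U)))"
    using U m XY by (simp add: IH mult_smult_distrib[of _ ?D ?D _ ?D])
  also have "\<dots> = (c m * ?c) \<cdot>\<^sub>m ((Y m * ?Y) * U)"
    using U m XY by simp
  finally show ?case by simp
qed (use U in simp)

lemma ntr_smult: "A \<in> carrier_mat d d \<Longrightarrow> ntr (c \<cdot>\<^sub>m A) = c * ntr A"
  by (auto simp: ntr_def sum_distrib_left)

lemma ntr_mult_commute: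
  assumes "A \<in> carrier_mat d d" "B \<in> carrier_mat d d"
  shows "ntr (A * B) = ntr (B * A)"
proof -
  have "(\<Sum>i<d. (A * B) $$ (i, i)) = (\<Sum>i<d. \<Sum>j<d. A $$ (i, j) * B $$ (j, i))"
    using assms by (simp add: scalar_prod_def atLeast0LessThan)
  also have "\<dots> = (\<Sum>j<d. \<Sum>i<d. B $$ (j, i) * A $$ (i, j))"
    by (subst sum.swap) (simp add: mult.commute)
  also have "\<dots> = (\<Sum>j<d. (B * A) $$ (j, j))"
    using assms by (simp add: scalar_prod_def atLeast0LessThan)
  finally show ?thesis
    using assms by (simp add: ntr_def)
qed

lemma ntr_intertwine:
  assumes U: "U \<in> carrier_mat d d" and W: "W \<in> carrier_mat d d" and W': "W' \<in> carrier_mat d d"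
    and UU: "U * U = c \<cdot>\<^sub>m 1\<^sub>m d" "c \<noteq> 0" and UW: "U * W = s \<cdot>\<^sub>m (W' * U)"
  shows "ntr W = s * ntr W'"
proof -
  have "c * ntr W = ntr (W * (U * U))"
    using W by (simp add: UU mult_smult_distrib[OF W one_carrier_mat] ntr_smult)
  also have "\<dots> = ntr ((W * U) * U)"
    using U W by simp
  also have "\<dots> = ntr (U * (W * U))"
    using U W by (intro ntr_mult_commute) auto
  also have "\<dots> = ntr ((s \<cdot>\<^sub>m (W' * U)) * U)"
    using U W by (simp flip: UW)
  also have "\<dots> = s * (c * ntr W')"
    using U W' by (simp add: mult_smult_assoc_mat[of _ d d] ntr_smult UU
        mult_smult_distrib[OF W' one_carrier_mat])
  finally show ?thesis using UU(2) by simp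
qed

lemma ntr_mprod_intertwine:
  assumes U: "U \<in> carrier_mat (2 ^ (n div 2)) (2 ^ (n div 2))"
    and UU: "U * U = c \<cdot>\<^sub>m 1\<^sub>m (2 ^ (n div 2))" "c \<noteq> 0"
    and XY: "\<And>m. m \<in> set ms \<Longrightarrow> X m \<in> carrier_mat (2 ^ (n div 2)) (2 ^ (n div 2)) \<and>
               Y m \<in> carrier_mat (2 ^ (n div 2)) (2 ^ (n div 2)) \<and> U * X m = s m \<cdot>\<^sub>m (Y m * U)"
  shows "ntr (mprod n (map X ms)) = prod_list (map s ms) * ntr (mprod n (map Y ms))"
  by (rule ntr_intertwine[OF U _ _ UU mprod_intertwine[OF U XY]])
    (use XY in \<open>auto intro!: mprod_carrier_mat\<close>)

section \<open>Pairings and kernel fibres\<close>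

lemma prod_ker_ge_pair_partition:
  fixes g :: "nat \<Rightarrow> 'a::comm_monoid_mult"
  assumes P: "P \<in> pair_partitions k" and ker: "ker_ge g P" and sq: "\<And>m. m \<in> {1..k} \<Longrightarrow> g m * g m = 1"
  shows "prod g {1..k} = 1"
proof -
  have part: "partition_on {1..k} P" and pairs: "\<And>B. B \<in> P \<Longrightarrow> card B = 2"
    using P by (auto simp: pair_partitions_def)
  have fin: "\<forall>B\<in>P. finite B"
    using pairs by (metis card.infinite zero_neq_numeral)
  have disj: "\<forall>A\<in>P. \<forall>B\<in>P. A \<noteq> B \<longrightarrow> A \<inter> B = {}"
    using partition_onD2[OF part] by (auto simp: disjoint_def)
  have "prod g {1..k} = prod g (\<Union>P)"
    using part by (simp add: partition_on_def)
  also have "\<dots> = (\<Prod>B\<in>P. prod g B)"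
    by (simp add: prod.Union_disjoint[OF fin disj])
  also have "\<dots> = (\<Prod>B\<in>P. 1)"
  proof (rule prod.cong [OF refl])
    fix B assume B: "B \<in> P"
    then obtain x y where xy: "B = {x, y}" "x \<noteq> y"
      using pairs card_2_iff by metis
    have "x \<in> {1..k}"
      using B xy part unfolding partition_on_def by blast
    then have "g x * g x = 1" by (rule sq)
    moreover have "g x = g y"
      using ker B xy unfolding ker_ge_def by blast
    ultimately show "prod g B = 1" using xy by simp
  qed
  finally show ?thesis by simp
qed

definition kernel_fiber :: "nat set \<Rightarrow> 'b set \<Rightarrow> nat set set \<Rightarrow> nat set \<Rightarrow> 'b \<Rightarrow> (nat \<Rightarrow> 'b) set" where
  "kernel_fiber A I P V R = {\<alpha>. \<alpha> \<in> A \<rightarrow>\<^sub>E I \<and> ker_ge \<alpha> P \<and> (\<forall>x\<in>V. \<alpha> x = R)}"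

lemma sum_ker_ge_eq_sum_kernel_fibers:
  assumes "finite A" "finite I" "V \<in> P" "V \<subseteq> A" "V \<noteq> {}"
  shows "(\<Sum>\<alpha>\<in>{\<alpha>. \<alpha> \<in> A \<rightarrow>\<^sub>E I \<and> ker_ge \<alpha> P}. F \<alpha>) = (\<Sum>R\<in>I. \<Sum>\<alpha>\<in>kernel_fiber A I P V R. F \<alpha>)"
proof -
  obtain v where v: "v \<in> V" using assms(5) by blast
  let ?S = "{\<alpha>. \<alpha> \<in> A \<rightarrow>\<^sub>E I \<and> ker_ge \<alpha> P}"
  have "finite ?S"
    by (rule finite_subset[of _ "A \<rightarrow>\<^sub>E I"]) (auto intro: finite_PiE assms)
  moreover have "(\<lambda>\<alpha>. \<alpha> v) ` ?S \<subseteq> I" using v assms(4) by auto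
  moreover have "{\<alpha> \<in> ?S. \<alpha> v = R} = kernel_fiber A I P V R" for R
    using v assms(3) unfolding kernel_fiber_def ker_ge_def by blast
  ultimately show ?thesis
    using sum.group[of ?S I "\<lambda>\<alpha>. \<alpha> v" F] assms(2) by simp
qed

lemma sum_kernel_fiber_involution:
  assumes hI: "h ` I \<subseteq> I" and hh: "\<And>x. x \<in> I \<Longrightarrow> h (h x) = x" and R: "R \<in> I"
    and PA: "\<Union>P \<subseteq> A" and VA: "V \<subseteq> A"
    and F: "\<And>\<alpha>. \<alpha> \<in> A \<rightarrow>\<^sub>E I \<Longrightarrow> ker_ge \<alpha> P \<Longrightarrow> F (restrict (h \<circ> \<alpha>) A) = F \<alpha>"
  shows "(\<Sum>\<alpha>\<in>kernel_fiber A I P V (h R). F \<alpha>) = (\<Sum>\<alpha>\<in>kernel_fiber A I P V R. F \<alpha>)"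
proof -
  define g where "g \<alpha> = restrict (h \<circ> \<alpha>) A" for \<alpha>
  have g_fiber: "g \<alpha> \<in> kernel_fiber A I P V (h S)" if "\<alpha> \<in> kernel_fiber A I P V S" for \<alpha> S
  proof -
    have "ker_ge (g \<alpha>) P"
      unfolding ker_ge_def
    proof (intro ballI)
      fix B x y assume B: "B \<in> P" "x \<in> B" "y \<in> B"
      then have "x \<in> A" "y \<in> A" using PA by blast+
      moreover have "\<alpha> x = \<alpha> y"
        using that B unfolding kernel_fiber_def ker_ge_def by blast
      ultimately show "g \<alpha> x = g \<alpha> y" by (simp add: g_def)
    qed
    then show ?thesis
      using that hI VA by (auto simp: kernel_fiber_def g_def PiE_iff image_subset_iff)
  qed
  have gg: "g (g \<alpha>) = \<alpha>" if "\<alpha> \<in> kernel_fiber A I P V S" for \<alpha> S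
  proof
    fix x show "g (g \<alpha>) x = \<alpha> x"
      using that hh by (cases "x \<in> A") (auto simp: kernel_fiber_def g_def)
  qed
  show ?thesis
  proof (rule sum.reindex_bij_witness[where i = g and j = g])
    fix \<alpha> assume \<alpha>: "\<alpha> \<in> kernel_fiber A I P V R"
    show "g \<alpha> \<in> kernel_fiber A I P V (h R)" using g_fiber[OF \<alpha>] .
    show "g (g \<alpha>) = \<alpha>" using gg[OF \<alpha>] .
  next
    fix \<alpha> assume \<alpha>: "\<alpha> \<in> kernel_fiber A I P V (h R)"
    show "g \<alpha> \<in> kernel_fiber A I P V R" using g_fiber[OF \<alpha>] unfolding hh[OF R] .
    show "g (g \<alpha>) = \<alpha>" using gg[OF \<alpha>] .
    have "\<alpha> \<in> A \<rightarrow>\<^sub>E I" "ker_ge \<alpha> P" using \<alpha> by (simp_all add: kernel_fiber_def)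
    then show "F (g \<alpha>) = F \<alpha>" unfolding g_def by (rule F)
  qed
qed

section \<open>Adjacent transpositions of increasing tuples\<close>

lemma Iset_finite: "finite (Iset n q)"
proof (rule finite_subset)
  show "Iset n q \<subseteq> {xs. set xs \<subseteq> {1..n} \<and> length xs = q}" by (auto simp: Iset_def)
qed (simp add: finite_lists_length_eq)

lemma sorted_list_of_set_set_strict: "sorted_wrt (<) R \<Longrightarrow> sorted_list_of_set (set R) = R"
  by (simp add: sorted_list_of_set_sort_remdups strict_sorted_iff distinct_remdups_id sorted_sort_id)

definition swap_adjacent :: "nat \<Rightarrow> nat list \<Rightarrow> nat list" where
  "swap_adjacent a R = sorted_list_of_set (Transposition.transpose a (Suc a) ` set R)"

lemma set_swap_adjacent: "set (swap_adjacent a R) = Transposition.transpose a (Suc a) ` set R"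
  by (simp add: swap_adjacent_def)

lemma swap_adjacent_Iset:
  assumes "a \<in> {1..<n}" "R \<in> Iset n q"
  shows "swap_adjacent a R \<in> Iset n q"
proof -
  have "length (swap_adjacent a R) = card (set R)"
    by (simp add: swap_adjacent_def card_image)
  moreover have "Transposition.transpose a (Suc a) ` set R \<subseteq> {1..n}"
    using assms by (auto simp: Iset_def transpose_def)
  ultimately show ?thesis
    using assms by (auto simp: Iset_def swap_adjacent_def strict_sorted_iff distinct_card)
qed

lemma swap_adjacent_swap_adjacent: "sorted_wrt (<) R \<Longrightarrow> swap_adjacent a (swap_adjacent a R) = R"
  by (simp add: swap_adjacent_def image_comp sorted_list_of_set_set_strict)

lemma swap_adjacent_eq_self:
  "sorted_wrt (<) R \<Longrightarrow> a \<in> set R \<Longrightarrow> Suc a \<in> set R \<Longrightarrow> swap_adjacent a R = R"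
  by (simp add: swap_adjacent_def sorted_list_of_set_set_strict)

lemma swap_adjacent_eq_map:
  assumes R: "sorted_wrt (<) R" and not_both: "\<not> (a \<in> set R \<and> Suc a \<in> set R)"
  shows "swap_adjacent a R = map (Transposition.transpose a (Suc a)) R"
proof -
  have "sorted_wrt (\<lambda>x y. Transposition.transpose a (Suc a) x < Transposition.transpose a (Suc a) y) R"
    using R by (rule sorted_wrt_mono_rel[rotated]) (use not_both in \<open>auto simp: transpose_def\<close>)
  then have "sorted_wrt (<) (map (Transposition.transpose a (Suc a)) R)"
    by (simp add: sorted_wrt_map)
  then show ?thesis
    by (metis sorted_list_of_set_set_strict list.set_map swap_adjacent_def)
qed

lemma downward_closed_eq_atLeastAtMost:
  assumes A: "finite A" "0 \<notin> A" and closed: "\<And>a. 0 < a \<Longrightarrow> Suc a \<in> A \<Longrightarrow> a \<in> A"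
  shows "A = {1..card A}"
proof (cases "A = {}")
  case False
  define M where "M = Max A"
  have down: "y \<in> A" if "y + d \<in> A" "0 < y" for y d
    using that by (induction d) (auto intro: closed)
  have "M \<in> A" using A False by (simp add: M_def)
  have "{1..M} \<subseteq> A"
  proof
    fix y assume "y \<in> {1..M}"
    then show "y \<in> A" using down[of y "M - y"] \<open>M \<in> A\<close> by simp
  qed
  moreover have "A \<subseteq> {1..M}"
    using A by (auto simp: M_def Suc_le_eq intro!: gr0I)
  ultimately have "A = {1..M}" by blast
  then show ?thesis by simp
qed simp

lemma Iset_eq_upt_if_downward_closed:
  assumes R: "R \<in> Iset n q" and closed: "\<And>a. 0 < a \<Longrightarrow> Suc a \<in> set R \<Longrightarrow> a \<in> set R"
  shows "R = [1..<q+1]"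
proof -
  have "set R = {1..card (set R)}"
    by (rule downward_closed_eq_atLeastAtMost[OF _ _ closed]) (use R in \<open>auto simp: Iset_def\<close>)
  moreover have "card (set R) = q"
    using R by (simp add: Iset_def strict_sorted_iff distinct_card)
  ultimately have "set R = {1..<q+1}"
    by (simp add: atLeastLessThanSuc_atLeastAtMost)
  then have "sorted_list_of_set (set R) = [1..<q+1]" by simp
  then show ?thesis
    using R by (simp add: Iset_def sorted_list_of_set_set_strict)
qed

lemma swap_adjacent_invariant_eq_upt:
  assumes inv: "\<And>a R. a \<in> {1..<n} \<Longrightarrow> R \<in> Iset n q \<Longrightarrow> f (swap_adjacent a R) = f R"
    and "R \<in> Iset n q"
  shows "f R = f [1..<q+1]"
  using \<open>R \<in> Iset n q\<close>
proof (induction "\<Sum>(set R)" arbitrary: R rule: less_induct)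
  case less
  show ?case
  proof (cases "\<forall>a. 0 < a \<longrightarrow> Suc a \<in> set R \<longrightarrow> a \<in> set R")
    case True
    then show ?thesis using Iset_eq_upt_if_downward_closed[OF less.prems] by simp
  next
    case False
    then obtain a where a: "0 < a" "Suc a \<in> set R" "a \<notin> set R" by blast
    let ?\<tau> = "Transposition.transpose a (Suc a)"
    have a_range: "a \<in> {1..<n}" using a less.prems by (auto simp: Iset_def)
    have "(\<Sum>x\<in>set R. ?\<tau> x) < \<Sum>(set R)"
      by (rule sum_strict_mono_ex1) (use a in \<open>auto simp: transpose_def\<close>)
    then have "\<Sum>(set (swap_adjacent a R)) < \<Sum>(set R)"
      by (simp add: set_swap_adjacent sum.reindex)
    then have "f (swap_adjacent a R) = f [1..<q+1]"
      using less.hyps swap_adjacent_Iset[OF a_range less.prems] by blast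
    then show ?thesis using inv[OF a_range less.prems] by simp
  qed
qed

section \<open>Invariance of the restricted sums\<close>

lemma add_anticommuting_involutions:
  fixes A B :: "'a::comm_ring_1 mat"
  assumes A: "A \<in> carrier_mat d d" and B: "B \<in> carrier_mat d d"
    and AA: "A * A = 1\<^sub>m d" and BB: "B * B = 1\<^sub>m d" and BA: "B * A = (-1) \<cdot>\<^sub>m (A * B)"
  shows "(A + B) * (A + B) = 2 \<cdot>\<^sub>m 1\<^sub>m d"
    and "(A + B) * A = B * (A + B)"
    and "(A + B) * B = A * (A + B)"
proof -
  have AB: "dim_row (A * B) = d" "dim_col (A * B) = d" using A B by auto
  have "(A + B) * (A + B) = (A * A + B * A) + (A * B + B * B)"
    using A B by (simp add: add_mult_distrib_mat[of _ d d] mult_add_distrib_mat[of _ d d])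
  also have "\<dots> = 2 \<cdot>\<^sub>m 1\<^sub>m d"
    unfolding AA BB BA using AB by (intro eq_matI) (auto simp: algebra_simps)
  finally show "(A + B) * (A + B) = 2 \<cdot>\<^sub>m 1\<^sub>m d" .
  have "(A + B) * A = A * A + B * A" "B * (A + B) = B * A + B * B"
    using A B by (simp_all add: add_mult_distrib_mat[of _ d d] mult_add_distrib_mat[of _ d d])
  then show "(A + B) * A = B * (A + B)"
    unfolding AA BB BA using AB by (intro eq_matI) auto
  have "(A + B) * B = A * B + B * B" "A * (A + B) = A * A + A * B"
    using A B by (simp_all add: add_mult_distrib_mat[of _ d d] mult_add_distrib_mat[of _ d d])
  then show "(A + B) * B = A * (A + B)"
    unfolding AA BB using AB by (intro eq_matI) auto
qed

lemma add_anticommute: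
  fixes A B L :: "'a::comm_ring_1 mat"
  assumes A: "A \<in> carrier_mat d d" and B: "B \<in> carrier_mat d d" and L: "L \<in> carrier_mat d d"
    and AL: "A * L = (-1) \<cdot>\<^sub>m (L * A)" and BL: "B * L = (-1) \<cdot>\<^sub>m (L * B)"
  shows "(A + B) * L = (-1) \<cdot>\<^sub>m (L * (A + B))"
proof -
  have "(A + B) * L = (-1) \<cdot>\<^sub>m (L * A) + (-1) \<cdot>\<^sub>m (L * B)"
    by (simp only: add_mult_distrib_mat[OF A B L] AL BL)
  also have "\<dots> = (-1) \<cdot>\<^sub>m (L * A + L * B)"
    by (rule add_smult_distrib_left_mat[symmetric]) (use A B L in auto)
  also have "\<dots> = (-1) \<cdot>\<^sub>m (L * (A + B))"
    by (simp only: mult_add_distrib_mat[OF L A B])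
  finally show ?thesis .
qed

lemma prod_list_map_square:
  assumes "\<And>x. x \<in> set xs \<Longrightarrow> f x * f x = (1::'a::comm_monoid_mult)"
  shows "prod_list (map f xs) * prod_list (map f xs) = 1"
  using assms
proof (induction xs)
  case (Cons x xs)
  have "prod_list (map f (x # xs)) * prod_list (map f (x # xs))
      = (f x * f x) * (prod_list (map f xs) * prod_list (map f xs))"
    by (simp add: mult_ac)
  then show ?case using Cons by simp
qed simp

lemma sorted_wrt_less_split_Suc:
  assumes R: "sorted_wrt (<) R" and a: "a \<in> set R" "Suc a \<in> set R"
  obtains xs ys where "R = xs @ a # Suc a # ys" "\<forall>x\<in>set xs. x < a" "\<forall>y\<in>set ys. Suc a < y"
proof -
  obtain xs zs where R_eq: "R = xs @ a # zs" using a(1) by (meson split_list)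
  have xs: "\<forall>x\<in>set xs. x < a" and zs: "\<forall>z\<in>set zs. a < z" "sorted_wrt (<) zs"
    using R R_eq by (auto simp: sorted_wrt_append)
  then have "Suc a \<in> set zs" using a(2) R_eq by auto
  then obtain z ys where zs_eq: "zs = z # ys" by (cases zs) auto
  have "z = Suc a"
    using zs \<open>Suc a \<in> set zs\<close> unfolding zs_eq by (auto simp: Suc_le_eq)
  then show ?thesis
    using that[of xs ys] R_eq xs zs unfolding zs_eq by auto
qed

lemma mprod_psi_carrier_mat:
  "even n \<Longrightarrow> set R \<subseteq> {1..n} \<Longrightarrow> mprod n (map (psi n) R) \<in> carrier_mat (2 ^ (n div 2)) (2 ^ (n div 2))"
  by (intro mprod_carrier_mat) (auto intro!: psi_carrier_mat)

lemma PsiR_carrier_mat: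
  "even n \<Longrightarrow> R \<in> Iset n q \<Longrightarrow> PsiR n R \<in> carrier_mat (2 ^ (n div 2)) (2 ^ (n div 2))"
  unfolding PsiR_def Iset_def by (auto intro!: smult_carrier_mat mprod_psi_carrier_mat)

lemma trword_restrict: "trword n k (restrict f {1..k}) = trword n k f"
  unfolding trword_def by (intro arg_cong[where f = "\<lambda>Ms. ntr (mprod n Ms)"]) auto

definition swap_op :: "nat \<Rightarrow> nat \<Rightarrow> complex mat" where
  "swap_op n a = psi n a + psi n (Suc a)"

context
  fixes n a :: nat
  assumes n: "even n" and a: "a \<in> {1..<n}"
begin

private lemma psi_adjacent_pair: "psi n a \<in> carrier_mat (2 ^ (n div 2)) (2 ^ (n div 2))"
    "psi n (Suc a) \<in> carrier_mat (2 ^ (n div 2)) (2 ^ (n div 2))"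
    "psi n a * psi n a = 1\<^sub>m (2 ^ (n div 2))" "psi n (Suc a) * psi n (Suc a) = 1\<^sub>m (2 ^ (n div 2))"
    "psi n (Suc a) * psi n a = (-1) \<cdot>\<^sub>m (psi n a * psi n (Suc a))"
  using a by (simp_all add: n psi_carrier_mat psi_square psi_anticommute[of n a "Suc a"])

lemma swap_op_carrier_mat: "swap_op n a \<in> carrier_mat (2 ^ (n div 2)) (2 ^ (n div 2))"
  using psi_adjacent_pair by (simp add: swap_op_def)

lemma swap_op_square: "swap_op n a * swap_op n a = 2 \<cdot>\<^sub>m 1\<^sub>m (2 ^ (n div 2))"
  unfolding swap_op_def by (rule add_anticommuting_involutions(1)[OF psi_adjacent_pair])

lemma swap_op_psi:
  assumes l: "l \<in> {1..n}"
  shows "swap_op n a * psi n l =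
    (if l = a \<or> l = Suc a then 1 else -1) \<cdot>\<^sub>m (psi n (Transposition.transpose a (Suc a) l) * swap_op n a)"
proof -
  consider "l = a" | "l = Suc a" | "l \<noteq> a" "l \<noteq> Suc a" by blast
  then show ?thesis
  proof cases
    case 1
    then show ?thesis
      using add_anticommuting_involutions(2)[OF psi_adjacent_pair] by (simp add: swap_op_def)
  next
    case 2
    then show ?thesis
      using add_anticommuting_involutions(3)[OF psi_adjacent_pair] by (simp add: swap_op_def)
  next
    case 3
    have "psi n a * psi n l = (-1) \<cdot>\<^sub>m (psi n l * psi n a)"
      "psi n (Suc a) * psi n l = (-1) \<cdot>\<^sub>m (psi n l * psi n (Suc a))"
      using 3 a l by (auto intro!: psi_anticommute[OF n])
    then show ?thesis
      using 3 add_anticommute[OF psi_adjacent_pair(1,2) psi_carrier_mat[OF n l]] by (simp add: swap_op_def)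
  qed
qed

lemma swap_op_mprod_psi:
  assumes R: "set R \<subseteq> {1..n}"
  shows "\<exists>c. c * c = 1 \<and> swap_op n a * mprod n (map (psi n) R) =
           c \<cdot>\<^sub>m (mprod n (map (psi n) (map (Transposition.transpose a (Suc a)) R)) * swap_op n a)"
proof -
  let ?s = "\<lambda>l. if l = a \<or> l = Suc a then 1 else (-1::complex)"
  have "swap_op n a * mprod n (map (psi n) R) = prod_list (map ?s R) \<cdot>\<^sub>m
      (mprod n (map (\<lambda>l. psi n (Transposition.transpose a (Suc a) l)) R) * swap_op n a)"
  proof (rule mprod_intertwine[OF swap_op_carrier_mat])
    fix l assume "l \<in> set R"
    then have l: "l \<in> {1..n}" and "Transposition.transpose a (Suc a) l \<in> {1..n}"
      using R a by (auto simp: transpose_def)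
    then show "psi n l \<in> carrier_mat (2 ^ (n div 2)) (2 ^ (n div 2)) \<and>
        psi n (Transposition.transpose a (Suc a) l) \<in> carrier_mat (2 ^ (n div 2)) (2 ^ (n div 2)) \<and>
        swap_op n a * psi n l = ?s l \<cdot>\<^sub>m (psi n (Transposition.transpose a (Suc a) l) * swap_op n a)"
      by (simp add: n psi_carrier_mat swap_op_psi)
  qed
  moreover have "prod_list (map ?s R) * prod_list (map ?s R) = 1"
    by (rule prod_list_map_square) simp
  ultimately show ?thesis by (auto simp: comp_def)
qed

lemma PsiR_map_transpose_sign:
  assumes R: "R \<in> Iset n q"
  shows "\<exists>e. e * e = 1 \<and> PsiR n (map (Transposition.transpose a (Suc a)) R) = e \<cdot>\<^sub>m PsiR n (swap_adjacent a R)"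
proof (cases "a \<in> set R \<and> Suc a \<in> set R")
  case False
  then show ?thesis
    using R by (auto simp: Iset_def swap_adjacent_eq_map intro: exI[of _ 1])
next
  case True
  let ?D = "2 ^ (n div 2)"
  have sorted: "sorted_wrt (<) R" and setR: "set R \<subseteq> {1..n}" using R by (auto simp: Iset_def)
  obtain xs ys where R_eq: "R = xs @ a # Suc a # ys"
    and xs: "\<forall>x\<in>set xs. x < a" and ys: "\<forall>y\<in>set ys. Suc a < y"
    using sorted_wrt_less_split_Suc[OF sorted] True by blast
  have "map (Transposition.transpose a (Suc a)) R = xs @ Suc a # a # ys"
    using xs ys unfolding R_eq by (auto intro!: map_idI)
  moreover
  have "set (map (psi n) xs) \<subseteq> carrier_mat ?D ?D" "set (map (psi n) ys) \<subseteq> carrier_mat ?D ?D"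
    using setR unfolding R_eq by (auto intro!: psi_carrier_mat[OF n])
  then have "mprod n (map (psi n) xs @ psi n (Suc a) # psi n a # map (psi n) ys)
      = (-1) \<cdot>\<^sub>m mprod n (map (psi n) xs @ psi n a # psi n (Suc a) # map (psi n) ys)"
    by (rule mprod_swap_adjacent[OF _ _ psi_adjacent_pair(1,2,5)])
  then have "mprod n (map (psi n) (xs @ Suc a # a # ys)) = (-1) \<cdot>\<^sub>m mprod n (map (psi n) R)"
    unfolding R_eq by simp
  ultimately have "PsiR n (map (Transposition.transpose a (Suc a)) R) = (-1) \<cdot>\<^sub>m PsiR n R"
    by (simp add: PsiR_def R_eq mult.commute)
  then show ?thesis
    using True sorted by (simp add: swap_adjacent_eq_self exI[of _ "-1"])
qed

lemma swap_op_PsiR: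
  assumes R: "R \<in> Iset n q"
  shows "\<exists>c. c * c = 1 \<and> swap_op n a * PsiR n R = c \<cdot>\<^sub>m (PsiR n (swap_adjacent a R) * swap_op n a)"
proof -
  let ?D = "2 ^ (n div 2)" and ?\<tau> = "Transposition.transpose a (Suc a)" and ?U = "swap_op n a"
  let ?k = "\<i> ^ (length R div 2)"
  have setR: "set R \<subseteq> {1..n}" using R by (auto simp: Iset_def)
  obtain c where c: "c * c = 1"
    "?U * mprod n (map (psi n) R) = c \<cdot>\<^sub>m (mprod n (map (psi n) (map ?\<tau> R)) * ?U)"
    using swap_op_mprod_psi[OF setR] by blast
  obtain e where e: "e * e = 1" "PsiR n (map ?\<tau> R) = e \<cdot>\<^sub>m PsiR n (swap_adjacent a R)"
    using PsiR_map_transpose_sign[OF R] by blast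
  have "set (map ?\<tau> R) \<subseteq> ?\<tau> ` {1..n}" using setR by auto
  also have "?\<tau> ` {1..n} = {1..n}" by (rule transpose_image_eq) (use a in auto)
  finally have M': "mprod n (map (psi n) (map ?\<tau> R)) \<in> carrier_mat ?D ?D"
    by (rule mprod_psi_carrier_mat[OF n])
  have M: "mprod n (map (psi n) R) \<in> carrier_mat ?D ?D"
    using mprod_psi_carrier_mat[OF n setR] .
  have P': "PsiR n (swap_adjacent a R) \<in> carrier_mat ?D ?D"
    using PsiR_carrier_mat[OF n swap_adjacent_Iset[OF a R]] .
  have "?U * PsiR n R = ?k \<cdot>\<^sub>m (?U * mprod n (map (psi n) R))"
    unfolding PsiR_def using M swap_op_carrier_mat by (simp add: mult_smult_distrib)
  also have "\<dots> = c \<cdot>\<^sub>m (PsiR n (map ?\<tau> R) * ?U)"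
    using M' swap_op_carrier_mat
    by (simp add: c(2) PsiR_def mult_smult_assoc_mat[of _ ?D ?D] mult.commute)
  also have "\<dots> = (c * e) \<cdot>\<^sub>m (PsiR n (swap_adjacent a R) * ?U)"
    using P' swap_op_carrier_mat by (simp add: e(2) mult_smult_assoc_mat[of _ ?D ?D])
  finally show ?thesis
    using c(1) e(1) by (intro exI[of _ "c * e"]) (simp add: algebra_simps)
qed

lemma trword_swap_adjacent:
  assumes P: "P \<in> pair_partitions k" and \<alpha>: "\<alpha> \<in> {1..k} \<rightarrow>\<^sub>E Iset n q" and ker: "ker_ge \<alpha> P"
  shows "trword n k (swap_adjacent a \<circ> \<alpha>) = trword n k \<alpha>"
proof -
  let ?D = "2 ^ (n div 2)" and ?ms = "[1..<k+1]" and ?U = "swap_op n a"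
  obtain \<delta> where \<delta>: "\<And>R. R \<in> Iset n q \<Longrightarrow> \<delta> R * \<delta> R = 1 \<and>
      ?U * PsiR n R = \<delta> R \<cdot>\<^sub>m (PsiR n (swap_adjacent a R) * ?U)"
    using swap_op_PsiR by metis
  have ms: "set ?ms = {1..k}"
    by (simp only: set_upt atLeastLessThanSuc_atLeastAtMost Suc_eq_plus1[symmetric])
  have "trword n k \<alpha> = prod_list (map (\<lambda>m. \<delta> (\<alpha> m)) ?ms) * trword n k (swap_adjacent a \<circ> \<alpha>)"
    unfolding trword_def comp_def
  proof (rule ntr_mprod_intertwine[OF swap_op_carrier_mat swap_op_square])
    fix m assume "m \<in> set ?ms"
    then have "\<alpha> m \<in> Iset n q" using \<alpha> ms by auto
    with \<delta>[of "\<alpha> m"] swap_adjacent_Iset[OF a, of "\<alpha> m" q] show "PsiR n (\<alpha> m) \<in> carrier_mat ?D ?D \<and>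
        PsiR n (swap_adjacent a (\<alpha> m)) \<in> carrier_mat ?D ?D \<and>
        ?U * PsiR n (\<alpha> m) = \<delta> (\<alpha> m) \<cdot>\<^sub>m (PsiR n (swap_adjacent a (\<alpha> m)) * ?U)"
      by (simp add: PsiR_carrier_mat[OF n])
  qed simp
  also have "prod_list (map (\<lambda>m. \<delta> (\<alpha> m)) ?ms) = (\<Prod>m\<in>{1..k}. \<delta> (\<alpha> m))"
    unfolding ms[symmetric] by (rule prod.distinct_set_conv_list[symmetric]) simp
  also have "\<dots> = 1"
  proof (rule prod_ker_ge_pair_partition[OF P])
    show "ker_ge (\<lambda>m. \<delta> (\<alpha> m)) P" using ker unfolding ker_ge_def by metis
  next
    fix m assume "m \<in> {1..k}"
    then have "\<alpha> m \<in> Iset n q" using \<alpha> by auto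
    then show "\<delta> (\<alpha> m) * \<delta> (\<alpha> m) = 1" using \<delta> by blast
  qed
  finally show ?thesis by (simp add: comp_def)
qed

lemma sum_kernel_fiber_swap_adjacent:
  assumes P: "P \<in> pair_partitions k" and V: "V \<in> P" and R: "R \<in> Iset n q"
  shows "(\<Sum>\<alpha>\<in>kernel_fiber {1..k} (Iset n q) P V (swap_adjacent a R). trword n k \<alpha>)
       = (\<Sum>\<alpha>\<in>kernel_fiber {1..k} (Iset n q) P V R. trword n k \<alpha>)"
proof (rule sum_kernel_fiber_involution[OF _ _ R])
  have "\<Union>P = {1..k}" using P by (simp add: pair_partitions_def partition_on_def)
  then show "\<Union>P \<subseteq> {1..k}" "V \<subseteq> {1..k}" using V by auto
  show "swap_adjacent a ` Iset n q \<subseteq> Iset n q" using swap_adjacent_Iset[OF a] by auto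
  show "swap_adjacent a (swap_adjacent a R') = R'" if "R' \<in> Iset n q" for R'
    using that by (simp add: Iset_def swap_adjacent_swap_adjacent)
  show "trword n k (restrict (swap_adjacent a \<circ> \<alpha>) {1..k}) = trword n k \<alpha>"
    if "\<alpha> \<in> {1..k} \<rightarrow>\<^sub>E Iset n q" "ker_ge \<alpha> P" for \<alpha>
    unfolding trword_restrict by (rule trword_swap_adjacent[OF P that])
qed

end

lemma sum_kernel_fiber_independent:
  assumes n: "even n" and P: "P \<in> pair_partitions k" and V: "V \<in> P"
    and R: "R \<in> Iset n q" and R': "R' \<in> Iset n q"
  shows "(\<Sum>\<alpha>\<in>kernel_fiber {1..k} (Iset n q) P V R'. trword n k \<alpha>)
       = (\<Sum>\<alpha>\<in>kernel_fiber {1..k} (Iset n q) P V R. trword n k \<alpha>)"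
proof -
  let ?G = "\<lambda>R. \<Sum>\<alpha>\<in>kernel_fiber {1..k} (Iset n q) P V R. trword n k \<alpha>"
  have "?G (swap_adjacent a R) = ?G R" if "a \<in> {1..<n}" "R \<in> Iset n q" for a R
    using sum_kernel_fiber_swap_adjacent[OF n that(1) P V that(2)] .
  then show ?thesis
    using swap_adjacent_invariant_eq_upt[of n q ?G] R R' by metis
qed

lemma powr_half_split:
  assumes "0 < x"
  shows "x powr (t / 2) = x powr ((t - 2) / 2) * (x::real)"
proof -
  have "t / 2 = (t - 2) / 2 + 1" by (simp add: field_simps)
  then have "x powr (t / 2) = x powr ((t - 2) / 2) * x powr 1"
    by (simp only: powr_add)
  then show ?thesis using assms by simp
qed

theorem lemma3p4:
  fixes n q k :: nat and P :: "nat set set" and V :: "nat set" and R :: "nat list"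
  assumes "even n" and "1 \<le> q" and "q \<le> n div 2"
    and "P \<in> pair_partitions k" and "V \<in> P" and "R \<in> Iset n q"
  shows "(\<Sum>\<alpha> \<in> {\<alpha>. \<alpha> \<in> {1..k} \<rightarrow>\<^sub>E Iset n q \<and> ker_ge \<alpha> P \<and> (\<forall>x\<in>V. \<alpha> x = R)}. trword n k \<alpha>)
           / of_real (real (card (Iset n q)) powr ((real k - 2) / 2))
         = S n q k P"
proof -
  note n = assms(1) and P = assms(4) and V = assms(5) and R = assms(6)
  define G where "G R' = (\<Sum>\<alpha>\<in>kernel_fiber {1..k} (Iset n q) P V R'. trword n k \<alpha>)" for R'
  define N where "N = card (Iset n q)"
  have "V \<subseteq> {1..k}" "V \<noteq> {}"
    using P V by (auto simp: pair_partitions_def partition_on_def)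
  then have "(\<Sum>\<alpha>\<in>{\<alpha>. \<alpha> \<in> {1..k} \<rightarrow>\<^sub>E Iset n q \<and> ker_ge \<alpha> P}. trword n k \<alpha>) = (\<Sum>R'\<in>Iset n q. G R')"
    unfolding G_def by (intro sum_ker_ge_eq_sum_kernel_fibers[OF _ Iset_finite V]) simp_all
  also have "\<dots> = of_nat N * G R"
    using sum_kernel_fiber_independent[OF n P V R] by (simp add: G_def N_def)
  finally have total: "(\<Sum>\<alpha>\<in>{\<alpha>. \<alpha> \<in> {1..k} \<rightarrow>\<^sub>E Iset n q \<and> ker_ge \<alpha> P}. trword n k \<alpha>) = of_nat N * G R" .
  have "real N > 0"
    using R Iset_finite by (auto simp: N_def card_gt_0_iff)
  then have "S n q k P = G R / of_real (real N powr ((real k - 2) / 2))"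
    unfolding S_def total N_def[symmetric] powr_half_split[OF \<open>real N > 0\<close>, of "real k"] by simp
  then show ?thesis
    by (simp add: G_def kernel_fiber_def N_def)
qed

end
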